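(* (Correctness.) Let $A$ be a ground (base) type and $v$ a value of type $A$. If $\cdot\vdash M:A$ in CC and $M\triangleright^* v$, then $\Delta_\Gamma\cup\Delta_M\vdash[\![M]\!]\triangleright^* v'$ in DCC for some $v'$ with $v'\equiv[\![v]\!]$, where $\Gamma=\cdot$, $\Delta_\Gamma=[\![\Gamma]\!]_d$ and $\Delta_M=[\![M]\!]_d$.
   Context: CC is the Calculus of Constructions with universes $U_0,U_1,\dots$, informally extended with base (ground) types such as the unit type and natural numbers whose types and values contain no $\lambda$-abstractions. Expressions $x\mid U_i\mid\Pi x{:}A.B\mid L\,M\mid\lambda x{:}A.M$; reduction $(\lambda x{:}A.N)\,M\triangleright N[M/x]$, $\triangleright^*$ zero or more steps; typing $\Gamma\vdash M:A$ by the standard CC rules (variable, $U_i:U_{i+1}$, $\Pi$ in $U_{\max(i,j)}$, application with result type $B[N/x]$, abstraction, conversion up to $\beta\eta$-equivalence). DCC: expressions $x\mid U_i\mid\Pi x{:}A.B\mid L@M\mid\ell_i\{\overline M\}$ with label names $\ell_i$ and lists $\overline M$; label contexts $\Delta::=\cdot\mid\Delta,\ell_i(\{\overline x{:}\overline A\},x{:}A\mapsto L:B)$. Reduction: $\Delta\vdash\ell\{\overline M\}@N\triangleright L[\overline M/\overline x,N/x]$ when $\ell(\{\overline x{:}\overline A\},x{:}A\mapsto L:B)\in\Delta$; $\triangleright^*$ zero or more steps. Equivalence $\equiv$ in DCC: two terms are equivalent if they reduce to a common term, or by the $\eta$-rule: if $L\triangleright^*\ell\{\overline N\}$, $M\triangleright^*M'$,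 $\ell(\{\overline x{:}\overline A\},x{:}A\mapsto N:B)\in\Delta$ and $N[\overline N/\overline x]\equiv M'@x$ then $L\equiv M$ (and symmetrically). Translation (by induction on the implicit typing derivation; each source $\lambda$ has a distinct tag $i$, written $\lambda^i$, corresponding to label $\ell_i$). $\mathrm{FV}(M)$ for $\Gamma\vdash M:A$: with $x_1,\dots,x_n$ the unbound variables of $M$ and $A$ and $\Gamma\vdash x_k:A_k$, $\mathrm{FV}(M)=\mathrm{FV}(A_1)\cup\dots\cup\mathrm{FV}(A_n)\cup(x_1{:}A_1,\dots,x_n{:}A_n)$, where $\cup$ appends the entries of the right operand not already in the left, preserving order. $[\![-]\!]$: $x\mapsto x$, $U_i\mapsto U_i$, $\Pi x{:}A.B\mapsto\Pi x{:}[\![A]\!].[\![B]\!]$, $M\,N\mapsto[\![M]\!]@[\![N]\!]$, $\lambda^ix{:}A.M\mapsto\ell_i\{\overline x\}$ where $\overline x{:}\overline A=\mathrm{FV}(\lambda^ix{:}A.M)$; base types and values translate to themselves. $[\![-]\!]_d$: universe (and base types/values) $\mapsto\cdot$; variable of type $A\mapsto[\![A]\!]_d$; $\Pi x{:}A.B\mapsto[\![A]\!]_d\cup[\![B]\!]_d$; $M\,N:B[N/x]$ (with $M:\Pi x{:}A.B$) $\mapsto[\![M]\!]_d\cup[\![N]\!]_d\cup[\![B[N/x]]\!]_d$; $\lambda^ix{:}A.M:\Pi x{:}A.B\mapsto([\![A]\!]_d\cup[\![M]\!]_d),\ell_i(\{\overline x{:}[\![\overline A]\!]\},x{:}[\![A]\!]\mapsto[\![M]\!]:[\![B]\!])$;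 a conversion from $M:A$ to $M:B\mapsto[\![M]\!]_d\cup[\![B]\!]_d$. On contexts: $[\![\cdot]\!]_d=\cdot$, $[\![\Gamma,x{:}A]\!]_d=[\![\Gamma]\!]_d\cup[\![A]\!]_d$. *)

theory Defs
  imports Main
begin

text \<open>Variables are de Bruijn indices. \<open>CLam t A M\<close> is the lambda with tag \<open>t\<close>
 (corresponding to label \<open>\<ell>_t\<close>), domain \<open>A\<close> and body \<open>M\<close>.\<close>

datatype cterm = CVar nat | CU nat | CPi cterm cterm | CApp cterm cterm
  | CLam nat cterm cterm | CTUnit | CUnitV | CTNat | CNatV nat

primrec clift :: "nat \<Rightarrow> cterm \<Rightarrow> cterm" where
  "clift k (CVar i) = (if i < k then CVar i else CVar (Suc i))"
| "clift k (CU n) = CU n"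
| "clift k (CPi A B) = CPi (clift k A) (clift (Suc k) B)"
| "clift k (CApp M N) = CApp (clift k M) (clift k N)"
| "clift k (CLam t A M) = CLam t (clift k A) (clift (Suc k) M)"
| "clift k CTUnit = CTUnit"
| "clift k CUnitV = CUnitV"
| "clift k CTNat = CTNat"
| "clift k (CNatV n) = CNatV n"

primrec csubst :: "cterm \<Rightarrow> nat \<Rightarrow> cterm \<Rightarrow> cterm" where
  "csubst (CVar i) k N = (if i < k then CVar i else if i = k then N else CVar (i - 1))"
| "csubst (CU n) k N = CU n"
| "csubst (CPi A B) k N = CPi (csubst A k N) (csubst B (Suc k) (clift 0 N))"
| "csubst (CApp L M) k N = CApp (csubst L k N) (csubst M k N)"
| "csubst (CLam t A M) k N = CLam t (csubst A k N) (csubst M (Suc k) (clift 0 N))"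
| "csubst CTUnit k N = CTUnit"
| "csubst CUnitV k N = CUnitV"
| "csubst CTNat k N = CTNat"
| "csubst (CNatV n) k N = CNatV n"

primrec cfv :: "cterm \<Rightarrow> nat set" where
  "cfv (CVar i) = {i}"
| "cfv (CU n) = {}"
| "cfv (CPi A B) = cfv A \<union> {i. Suc i \<in> cfv B}"
| "cfv (CApp M N) = cfv M \<union> cfv N"
| "cfv (CLam t A M) = cfv A \<union> {i. Suc i \<in> cfv M}"
| "cfv CTUnit = {}"
| "cfv CUnitV = {}"
| "cfv CTNat = {}"
| "cfv (CNatV n) = {}"

primrec ctags :: "cterm \<Rightarrow> nat list" where
  "ctags (CVar i) = []"
| "ctags (CU n) = []"
| "ctags (CPi A B) = ctags A @ ctags B"
| "ctags (CApp M N) = ctags M @ ctags N"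
| "ctags (CLam t A M) = t # ctags A @ ctags M"
| "ctags CTUnit = []"
| "ctags CUnitV = []"
| "ctags CTNat = []"
| "ctags (CNatV n) = []"

definition cliftn :: "nat \<Rightarrow> cterm \<Rightarrow> cterm" where
  "cliftn n M = (clift 0 ^^ n) M"

text \<open>Contexts: lists of types, head = innermost binding (index 0).
  \<open>cty \<Gamma> i\<close> is the type of variable \<open>i\<close>, as a term in context \<open>\<Gamma>\<close>.\<close>
definition cty :: "cterm list \<Rightarrow> nat \<Rightarrow> cterm" where
  "cty \<Gamma> i = cliftn (Suc i) (\<Gamma> ! i)"

inductive cbeta_head :: "cterm \<Rightarrow> cterm \<Rightarrow> bool" where
  "cbeta_head (CApp (CLam t A N) M) (csubst N 0 M)"

inductive ceta_head :: "cterm \<Rightarrow> cterm \<Rightarrow> bool" where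
  "ceta_head (CLam t A (CApp (clift 0 M) (CVar 0))) M"

inductive ccomp :: "(cterm \<Rightarrow> cterm \<Rightarrow> bool) \<Rightarrow> cterm \<Rightarrow> cterm \<Rightarrow> bool" for R where
  base: "R M N \<Longrightarrow> ccomp R M N"
| PiL: "ccomp R A A' \<Longrightarrow> ccomp R (CPi A B) (CPi A' B)"
| PiR: "ccomp R B B' \<Longrightarrow> ccomp R (CPi A B) (CPi A B')"
| AppL: "ccomp R M M' \<Longrightarrow> ccomp R (CApp M N) (CApp M' N)"
| AppR: "ccomp R N N' \<Longrightarrow> ccomp R (CApp M N) (CApp M N')"
| LamL: "ccomp R A A' \<Longrightarrow> ccomp R (CLam t A M) (CLam t A' M)"
| LamR: "ccomp R M M' \<Longrightarrow> ccomp R (CLam t A M) (CLam t A M')"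

definition cred :: "cterm \<Rightarrow> cterm \<Rightarrow> bool" where
  "cred = (ccomp cbeta_head)\<^sup>*\<^sup>*"

definition cconv :: "cterm \<Rightarrow> cterm \<Rightarrow> bool" where
  "cconv = equivclp (ccomp (\<lambda>M N. cbeta_head M N \<or> ceta_head M N))"

inductive cc_wf :: "cterm list \<Rightarrow> bool"
  and cc_ty :: "cterm list \<Rightarrow> cterm \<Rightarrow> cterm \<Rightarrow> bool" where
  wf_nil: "cc_wf []"
| wf_cons: "cc_wf \<Gamma> \<Longrightarrow> cc_ty \<Gamma> A (CU i) \<Longrightarrow> cc_wf (A # \<Gamma>)"
| ty_var: "cc_wf \<Gamma> \<Longrightarrow> i < length \<Gamma> \<Longrightarrow> cc_ty \<Gamma> (CVar i) (cty \<Gamma> i)"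
| ty_univ: "cc_wf \<Gamma> \<Longrightarrow> cc_ty \<Gamma> (CU i) (CU (Suc i))"
| ty_pi: "cc_ty \<Gamma> A (CU i) \<Longrightarrow> cc_ty (A # \<Gamma>) B (CU j) \<Longrightarrow> cc_ty \<Gamma> (CPi A B) (CU (max i j))"
| ty_app: "cc_ty \<Gamma> M (CPi A B) \<Longrightarrow> cc_ty \<Gamma> N A \<Longrightarrow> cc_ty \<Gamma> (CApp M N) (csubst B 0 N)"
| ty_lam: "cc_ty (A # \<Gamma>) M B \<Longrightarrow> cc_ty \<Gamma> (CPi A B) (CU i) \<Longrightarrow> cc_ty \<Gamma> (CLam t A M) (CPi A B)"
| ty_conv: "cc_ty \<Gamma> M A \<Longrightarrow> cc_ty \<Gamma> B (CU i) \<Longrightarrow> cconv A B \<Longrightarrow> cc_ty \<Gamma> M B"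
| ty_tunit: "cc_wf \<Gamma> \<Longrightarrow> cc_ty \<Gamma> CTUnit (CU 0)"
| ty_unitv: "cc_wf \<Gamma> \<Longrightarrow> cc_ty \<Gamma> CUnitV CTUnit"
| ty_tnat: "cc_wf \<Gamma> \<Longrightarrow> cc_ty \<Gamma> CTNat (CU 0)"
| ty_natv: "cc_wf \<Gamma> \<Longrightarrow> cc_ty \<Gamma> (CNatV n) CTNat"

definition ground_type :: "cterm \<Rightarrow> bool" where
  "ground_type A \<longleftrightarrow> A = CTUnit \<or> A = CTNat"

inductive value_of :: "cterm \<Rightarrow> cterm \<Rightarrow> bool" where
  "value_of CUnitV CTUnit"
| "value_of (CNatV n) CTNat"

datatype dterm = DVar nat | DU nat | DPi dterm dterm | DApp dterm dterm
  | DLab nat "dterm list" | DTUnit | DUnitV | DTNat | DNatV nat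

text \<open>A label-context entry \<open>\<ell>_l({xs : As}, x : A \<mapsto> L : B)\<close> is \<open>(l, As, A, L, B)\<close>.
 In de Bruijn form the parameters form a telescope: \<open>As ! k\<close> lives in the context of
 the first \<open>k\<close> parameters, \<open>A\<close> in that of all \<open>n = length As\<close> parameters, and \<open>L\<close>, \<open>B\<close>
 in that of the parameters followed by \<open>x\<close> (so \<open>x\<close> is index 0 and parameter \<open>k\<close> is
 index \<open>n - k\<close>).\<close>
type_synonym lentry = "nat \<times> dterm list \<times> dterm \<times> dterm \<times> dterm"
type_synonym lctx = "lentry list"

primrec dren :: "(nat \<Rightarrow> nat) \<Rightarrow> dterm \<Rightarrow> dterm" where
  "dren f (DVar i) = DVar (f i)"
| "dren f (DU n) = DU n"
| "dren f (DPi A B) = DPi (dren f A) (dren (\<lambda>i. case i of 0 \<Rightarrow> 0 | Suc j \<Rightarrow> Suc (f j)) B)"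
| "dren f (DApp M N) = DApp (dren f M) (dren f N)"
| "dren f (DLab l Ns) = DLab l (map (dren f) Ns)"
| "dren f DTUnit = DTUnit"
| "dren f DUnitV = DUnitV"
| "dren f DTNat = DTNat"
| "dren f (DNatV n) = DNatV n"

definition dlift :: "dterm \<Rightarrow> dterm" where
  "dlift = dren Suc"

primrec dsubst :: "(nat \<Rightarrow> dterm) \<Rightarrow> dterm \<Rightarrow> dterm" where
  "dsubst s (DVar i) = s i"
| "dsubst s (DU n) = DU n"
| "dsubst s (DPi A B) = DPi (dsubst s A) (dsubst (\<lambda>i. case i of 0 \<Rightarrow> DVar 0 | Suc j \<Rightarrow> dlift (s j)) B)"
| "dsubst s (DApp M N) = DApp (dsubst s M) (dsubst s N)"
| "dsubst s (DLab l Ns) = DLab l (map (dsubst s) Ns)"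
| "dsubst s DTUnit = DTUnit"
| "dsubst s DUnitV = DUnitV"
| "dsubst s DTNat = DTNat"
| "dsubst s (DNatV n) = DNatV n"

text \<open>The substitution \<open>[Ns/xs, N/x]\<close> for a label body.\<close>
definition lsub :: "dterm list \<Rightarrow> dterm \<Rightarrow> nat \<Rightarrow> dterm" where
  "lsub Ns N i = (if i = 0 then N else if i \<le> length Ns then Ns ! (length Ns - i)
                  else DVar (i - Suc (length Ns)))"

inductive dstep :: "lctx \<Rightarrow> dterm \<Rightarrow> dterm \<Rightarrow> bool" for \<Delta> where
  lab: "(l, As, A, L, B) \<in> set \<Delta> \<Longrightarrow> length Ns = length As \<Longrightarrow>
        dstep \<Delta> (DApp (DLab l Ns) N) (dsubst (lsub Ns N) L)"
| PiL: "dstep \<Delta> A A' \<Longrightarrow> dstep \<Delta> (DPi A B) (DPi A' B)"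
| PiR: "dstep \<Delta> B B' \<Longrightarrow> dstep \<Delta> (DPi A B) (DPi A B')"
| AppL: "dstep \<Delta> M M' \<Longrightarrow> dstep \<Delta> (DApp M N) (DApp M' N)"
| AppR: "dstep \<Delta> N N' \<Longrightarrow> dstep \<Delta> (DApp M N) (DApp M N')"
| LabArg: "i < length Ns \<Longrightarrow> dstep \<Delta> (Ns ! i) M' \<Longrightarrow> dstep \<Delta> (DLab l Ns) (DLab l (Ns[i := M']))"

definition dsteps :: "lctx \<Rightarrow> dterm \<Rightarrow> dterm \<Rightarrow> bool" where
  "dsteps \<Delta> = (dstep \<Delta>)\<^sup>*\<^sup>*"

text \<open>Equivalence: common reduct, or the eta rule (both orientations). In the eta rule
 the bound \<open>x\<close> becomes the fresh index 0, so the other terms are lifted.\<close>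
inductive deq :: "lctx \<Rightarrow> dterm \<Rightarrow> dterm \<Rightarrow> bool" for \<Delta> where
  common: "dsteps \<Delta> L N \<Longrightarrow> dsteps \<Delta> M N \<Longrightarrow> deq \<Delta> L M"
| eta1: "dsteps \<Delta> L (DLab l Ns) \<Longrightarrow> dsteps \<Delta> M M' \<Longrightarrow> (l, As, A, N, B) \<in> set \<Delta> \<Longrightarrow>
         length Ns = length As \<Longrightarrow>
         deq \<Delta> (dsubst (lsub (map dlift Ns) (DVar 0)) N) (DApp (dlift M') (DVar 0)) \<Longrightarrow>
         deq \<Delta> L M"
| eta2: "dsteps \<Delta> L (DLab l Ns) \<Longrightarrow> dsteps \<Delta> M M' \<Longrightarrow> (l, As, A, N, B) \<in> set \<Delta> \<Longrightarrow>
         length Ns = length As \<Longrightarrow>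
         deq \<Delta> (dsubst (lsub (map dlift Ns) (DVar 0)) N) (DApp (dlift M') (DVar 0)) \<Longrightarrow>
         deq \<Delta> M L"

definition lunion :: "'a list \<Rightarrow> 'a list \<Rightarrow> 'a list" where
  "lunion xs ys = xs @ filter (\<lambda>y. y \<notin> set xs) ys"

text \<open>A set of variables listed in context order (outermost binding first).\<close>
definition ctxord :: "nat set \<Rightarrow> nat list" where
  "ctxord S = rev (sorted_list_of_set S)"

text \<open>\<open>FV\<close>: given the unbound variables \<open>x_1..x_n\<close> (in context order),
 \<open>FV = FV(A_1) \<union> ... \<union> FV(A_n) \<union> (x_1,..,x_n)\<close>, where \<open>A_k\<close> is the type of \<open>x_k\<close>
 (whose own type is a universe). The first argument is fuel; since the variables of
 \<open>cty \<Gamma> x\<close> are all \<open>> x\<close>, fuel \<open>length \<Gamma>\<close> suffices.\<close>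
fun fvl :: "nat \<Rightarrow> cterm list \<Rightarrow> nat list \<Rightarrow> nat list" where
  "fvl 0 \<Gamma> xs = xs"
| "fvl (Suc n) \<Gamma> xs =
     lunion (foldl lunion [] (map (\<lambda>x. fvl n \<Gamma> (ctxord (cfv (cty \<Gamma> x)))) xs)) xs"

definition FV :: "cterm list \<Rightarrow> cterm \<Rightarrow> cterm \<Rightarrow> nat list" where
  "FV \<Gamma> M A = fvl (length \<Gamma>) \<Gamma> (ctxord (cfv M \<union> cfv A))"

primrec pos :: "nat list \<Rightarrow> nat \<Rightarrow> nat" where
  "pos [] j = 0"
| "pos (x # xs) j = (if x = j then 0 else Suc (pos xs j))"

text \<open>Renaming from context \<open>\<Gamma>\<close> into the telescope of the first \<open>m\<close> label parameters
 \<open>xs\<close> (parameter \<open>k\<close> has index \<open>m - 1 - k\<close> there).\<close>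
definition telren :: "nat list \<Rightarrow> nat \<Rightarrow> nat \<Rightarrow> nat" where
  "telren xs m j = m - Suc (pos xs j)"

definition upren :: "(nat \<Rightarrow> nat) \<Rightarrow> nat \<Rightarrow> nat" where
  "upren f i = (case i of 0 \<Rightarrow> 0 | Suc j \<Rightarrow> Suc (f j))"

text \<open>The translation, by induction on the typing derivation:
 \<open>tr \<Gamma> M A Mt \<Delta>\<close> means that some derivation of \<open>\<Gamma> \<turnstile> M : A\<close> yields
 \<open>[[M]] = Mt\<close> and \<open>[[M]]_d = \<Delta>\<close>. The derivation is the CC derivation, where
 the derivations of types needed for \<open>[[-]]\<close>, \<open>[[-]]_d\<close> (types of variables,
 \<open>B[N/x]\<close> in applications, codomain \<open>B\<close> of a lambda) are carried as premises.\<close>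
inductive tr :: "cterm list \<Rightarrow> cterm \<Rightarrow> cterm \<Rightarrow> dterm \<Rightarrow> lctx \<Rightarrow> bool" where
  tr_univ: "cc_wf \<Gamma> \<Longrightarrow> tr \<Gamma> (CU i) (CU (Suc i)) (DU i) []"
| tr_tunit: "cc_wf \<Gamma> \<Longrightarrow> tr \<Gamma> CTUnit (CU 0) DTUnit []"
| tr_unitv: "cc_wf \<Gamma> \<Longrightarrow> tr \<Gamma> CUnitV CTUnit DUnitV []"
| tr_tnat: "cc_wf \<Gamma> \<Longrightarrow> tr \<Gamma> CTNat (CU 0) DTNat []"
| tr_natv: "cc_wf \<Gamma> \<Longrightarrow> tr \<Gamma> (CNatV n) CTNat (DNatV n) []"
| tr_var: "cc_wf \<Gamma> \<Longrightarrow> i < length \<Gamma> \<Longrightarrow> tr \<Gamma> (cty \<Gamma> i) (CU k) At \<Delta>A \<Longrightarrow>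
           tr \<Gamma> (CVar i) (cty \<Gamma> i) (DVar i) \<Delta>A"
| tr_pi: "tr \<Gamma> A (CU i) At \<Delta>1 \<Longrightarrow> tr (A # \<Gamma>) B (CU j) Bt \<Delta>2 \<Longrightarrow>
          tr \<Gamma> (CPi A B) (CU (max i j)) (DPi At Bt) (lunion \<Delta>1 \<Delta>2)"
| tr_app: "tr \<Gamma> M (CPi A B) Mt \<Delta>1 \<Longrightarrow> tr \<Gamma> N A Nt \<Delta>2 \<Longrightarrow>
           tr \<Gamma> (csubst B 0 N) (CU k) Bt \<Delta>3 \<Longrightarrow>
           tr \<Gamma> (CApp M N) (csubst B 0 N) (DApp Mt Nt) (lunion (lunion \<Delta>1 \<Delta>2) \<Delta>3)"
| tr_lam: "tr (A # \<Gamma>) M B Mt \<Delta>M \<Longrightarrow> tr \<Gamma> A (CU i) At \<Delta>A \<Longrightarrow>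
           tr (A # \<Gamma>) B (CU j) Bt \<Delta>B \<Longrightarrow>
           xs = FV \<Gamma> (CLam t A M) (CPi A B) \<Longrightarrow>
           length Ats = length xs \<Longrightarrow>
           (\<forall>k < length xs. \<exists>u \<Delta>k. tr \<Gamma> (cty \<Gamma> (xs ! k)) (CU u) (Ats ! k) \<Delta>k) \<Longrightarrow>
           tr \<Gamma> (CLam t A M) (CPi A B) (DLab t (map DVar xs))
              (lunion \<Delta>A \<Delta>M @
                [(t, map (\<lambda>k. dren (telren xs k) (Ats ! k)) [0..<length xs],
                  dren (telren xs (length xs)) At,
                  dren (upren (telren xs (length xs))) Mt,
                  dren (upren (telren xs (length xs))) Bt)])"
| tr_conv: "tr \<Gamma> M A Mt \<Delta>1 \<Longrightarrow> tr \<Gamma> B (CU i) Bt \<Delta>2 \<Longrightarrow> cconv A B \<Longrightarrow>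
            tr \<Gamma> M B Mt (lunion \<Delta>1 \<Delta>2)"

fun base_tr :: "cterm \<Rightarrow> dterm" where
  "base_tr CUnitV = DUnitV"
| "base_tr (CNatV n) = DNatV n"
| "base_tr CTUnit = DTUnit"
| "base_tr CTNat = DTNat"
| "base_tr _ = undefined"

end

(* A beta-reduction of M to a base value v can be standardized into a weak-head
   reduction: standard reductions (weak-head steps, then standard reductions of the
   immediate subterms) are closed under further beta steps, and v has no proper subterms.
   Weak-head reduction never reduces under a lambda, so it can be simulated step by step
   in DCC by a relation that matches each lambda with a label application whose body,
   instantiated by the arguments, is again related to the lambda body. The translation
   produces related terms, the relation is stable under substitution, so every head beta
   step is matched by one label step, and the only DCC term related to v is v itself. *)

theory Submission
  imports Defs
begin

section \<open>Standardization of CC reduction\<close>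

lemma clift_clift:
  "i < k + 1 \<Longrightarrow> clift (Suc k) (clift i t) = clift i (clift k t)"
  by (induct t arbitrary: i k) auto

lemma clift_csubst:
  "j < i + 1 \<Longrightarrow> clift i (csubst t j s) = csubst (clift (i + 1) t) j (clift i s)"
  by (induct t arbitrary: i j s) (simp_all add: diff_Suc clift_clift split: nat.split)

lemma clift_csubst_below:
  "i < j + 1 \<Longrightarrow> clift i (csubst t j s) = csubst (clift i t) (j + 1) (clift i s)"
  by (induct t arbitrary: i j s) (auto simp add: clift_clift)

lemma csubst_clift [simp]: "csubst (clift k t) k s = t"
  by (induct t arbitrary: k s) simp_all

lemma csubst_csubst:
  "i < j + 1 \<Longrightarrow>
   csubst (csubst t (Suc j) (clift i v)) i (csubst u j v) = csubst (csubst t i u) j v"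
  by (induct t arbitrary: i j u v)
    (auto simp add: diff_Suc clift_clift [symmetric] clift_csubst_below split: nat.split)

inductive whr :: "cterm \<Rightarrow> cterm \<Rightarrow> bool" where
  whr_beta: "whr (CApp (CLam t A N) P) (csubst N 0 P)"
| whr_app: "whr M M' \<Longrightarrow> whr (CApp M P) (CApp M' P)"

lemma whr_clift: "whr M M' \<Longrightarrow> whr (clift k M) (clift k M')"
proof (induct arbitrary: k rule: whr.induct)
  case (whr_beta t A N P)
  show ?case using whr.whr_beta[of t "clift k A" "clift (Suc k) N" "clift k P"]
    by (simp add: clift_csubst)
qed (auto intro: whr.intros)

lemma whr_csubst: "whr M M' \<Longrightarrow> whr (csubst M k N) (csubst M' k N)"
proof (induct arbitrary: k N rule: whr.induct)
  case (whr_beta t A B P)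
  show ?case
    using whr.whr_beta[of t "csubst A k N" "csubst B (Suc k) (clift 0 N)" "csubst P k N"]
    by (simp add: csubst_csubst[of 0 k, simplified])
qed (auto intro: whr.intros)

lemma whrs_app: "whr\<^sup>*\<^sup>* M M' \<Longrightarrow> whr\<^sup>*\<^sup>* (CApp M P) (CApp M' P)"
  by (induct rule: rtranclp_induct) (auto intro: rtranclp.rtrancl_into_rtrancl whr_app)

inductive std :: "cterm \<Rightarrow> cterm \<Rightarrow> bool" where
  std_whr: "whr M M' \<Longrightarrow> std M' N \<Longrightarrow> std M N"
| std_var: "std (CVar i) (CVar i)"
| std_u: "std (CU i) (CU i)"
| std_tunit: "std CTUnit CTUnit"
| std_unitv: "std CUnitV CUnitV"
| std_tnat: "std CTNat CTNat"
| std_natv: "std (CNatV n) (CNatV n)"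
| std_pi: "std A A' \<Longrightarrow> std B B' \<Longrightarrow> std (CPi A B) (CPi A' B')"
| std_app: "std M M' \<Longrightarrow> std N N' \<Longrightarrow> std (CApp M N) (CApp M' N')"
| std_lam: "std A A' \<Longrightarrow> std M M' \<Longrightarrow> std (CLam t A M) (CLam t A' M')"

lemmas std_congs = std_var std_u std_tunit std_unitv std_tnat std_natv std_pi std_app std_lam

lemma std_refl: "std M M"
  by (induct M) (auto intro: std_congs)

lemma std_whrs: "whr\<^sup>*\<^sup>* M M' \<Longrightarrow> std M' N \<Longrightarrow> std M N"
  by (induct rule: converse_rtranclp_induct) (auto intro: std_whr)

lemma std_clift: "std M N \<Longrightarrow> std (clift k M) (clift k N)"
  by (induct arbitrary: k rule: std.induct) (auto intro: std_congs std_whr whr_clift)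

lemma std_csubst: "std M M' \<Longrightarrow> std N N' \<Longrightarrow> std (csubst M k N) (csubst M' k N')"
proof (induct arbitrary: k N N' rule: std.induct)
  case (std_whr M M' P)
  then show ?case by (auto intro: std.std_whr whr_csubst)
next
  case (std_pi A A' B B')
  then show ?case by (simp add: std.std_pi std_clift)
next
  case (std_lam A A' M M' t)
  then show ?case by (simp add: std.std_lam std_clift)
qed (auto intro: std_congs)

lemma std_CLamD:
  "std M (CLam t A' N') \<Longrightarrow> \<exists>A N. whr\<^sup>*\<^sup>* M (CLam t A N) \<and> std N N'"
proof (induct M "CLam t A' N'" rule: std.induct)
  case (std_whr M M')
  then show ?case by (meson converse_rtranclp_into_rtranclp)
qed auto

inductive_cases ccomp_appE: "ccomp R (CApp M N) X"
inductive_cases ccomp_lamE: "ccomp R (CLam t M N) X"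
inductive_cases ccomp_piE: "ccomp R (CPi M N) X"
inductive_cases cbeta_headE: "cbeta_head M N"

lemma ccomp_cbeta_head_not_atom:
  "ccomp cbeta_head M N \<Longrightarrow> M \<notin> {CVar i, CU j, CTUnit, CUnitV, CTNat, CNatV n}"
  by (induct rule: ccomp.induct) (auto elim: cbeta_headE)

text \<open>The key case is a beta step at the root of an application whose function part
  only standard-reduces to a lambda: the weak-head reduction to that lambda is extended
  by the beta step itself.\<close>
lemma std_cbeta_step: "std M N \<Longrightarrow> ccomp cbeta_head N N' \<Longrightarrow> std M N'"
proof (induct arbitrary: N' rule: std.induct)
  case (std_whr M M' N)
  then show ?case by (auto intro: std.std_whr)
next
  case (std_pi A A' B B')
  from std_pi.prems show ?case
    by (rule ccomp_piE) (auto elim: cbeta_headE intro: std_congs std_pi.hyps)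
next
  case (std_lam A A' M M' t)
  from std_lam.prems show ?case
    by (rule ccomp_lamE) (auto elim: cbeta_headE intro: std_congs std_lam.hyps)
next
  case (std_app M M' P P')
  from std_app.prems show ?case
  proof (rule ccomp_appE)
    assume "cbeta_head (CApp M' P') N'"
    then obtain t A' B' where M': "M' = CLam t A' B'" and N': "N' = csubst B' 0 P'"
      by (auto elim: cbeta_headE)
    obtain A B where whr_lam: "whr\<^sup>*\<^sup>* M (CLam t A B)" and "std B B'"
      using std_CLamD std_app.hyps(1) M' by blast
    have "whr\<^sup>*\<^sup>* (CApp M P) (csubst B 0 P)"
      using whrs_app[OF whr_lam] whr_beta by (meson rtranclp.rtrancl_into_rtrancl)
    moreover have "std (csubst B 0 P) (csubst B' 0 P')"
      using \<open>std B B'\<close> std_app.hyps(3) by (rule std_csubst)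
    ultimately show ?thesis using N' by (auto intro: std_whrs)
  qed (auto intro: std_congs std_app.hyps)
qed (auto dest: ccomp_cbeta_head_not_atom)

lemma cred_imp_std: "cred M N \<Longrightarrow> std M N"
  unfolding cred_def by (induct rule: rtranclp_induct) (auto intro: std_refl std_cbeta_step)

lemma std_value_imp_whrs: "std M v \<Longrightarrow> value_of v A \<Longrightarrow> whr\<^sup>*\<^sup>* M v"
  by (induct rule: std.induct) (auto intro: converse_rtranclp_into_rtranclp elim: value_of.cases)

lemma cred_value_imp_whrs: "cred M v \<Longrightarrow> value_of v A \<Longrightarrow> whr\<^sup>*\<^sup>* M v"
  using cred_imp_std std_value_imp_whrs by blast

section \<open>Substitution in DCC and parallel substitution in CC\<close>

primrec dfv :: "dterm \<Rightarrow> nat set" where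
  "dfv (DVar i) = {i}"
| "dfv (DU n) = {}"
| "dfv (DPi A B) = dfv A \<union> {i. Suc i \<in> dfv B}"
| "dfv (DApp M N) = dfv M \<union> dfv N"
| "dfv (DLab l Ns) = \<Union> (set (map dfv Ns))"
| "dfv DTUnit = {}"
| "dfv DUnitV = {}"
| "dfv DTNat = {}"
| "dfv (DNatV n) = {}"

lemma finite_Collect_Suc_mem: "finite S \<Longrightarrow> finite {i. Suc i \<in> S}"
  using finite_vimageI[of S Suc] by (simp add: vimage_def)

lemma finite_dfv: "finite (dfv X)"
  by (induct X) (simp_all add: finite_Collect_Suc_mem)

lemma finite_cfv: "finite (cfv M)"
  by (induct M) (simp_all add: finite_Collect_Suc_mem)

abbreviation dexts :: "(nat \<Rightarrow> dterm) \<Rightarrow> nat \<Rightarrow> dterm" where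
  "dexts s \<equiv> \<lambda>i. case i of 0 \<Rightarrow> DVar 0 | Suc j \<Rightarrow> dlift (s j)"

lemma dren_dren: "dren f (dren g X) = dren (f \<circ> g) X"
proof (induct X arbitrary: f g)
  case (DPi A B)
  then show ?case by simp (rule arg_cong[where f="\<lambda>h. dren h B"], auto split: nat.split)
qed auto

lemma dsubst_dren: "dsubst s (dren f X) = dsubst (s \<circ> f) X"
proof (induct X arbitrary: s f)
  case (DPi A B)
  then show ?case by simp (rule arg_cong[where f="\<lambda>h. dsubst h B"], auto split: nat.split)
qed auto

lemma dren_dsubst: "dren f (dsubst s X) = dsubst (dren f \<circ> s) X"
proof (induct X arbitrary: s f)
  case (DPi A B)
  then show ?case
    by simp (rule arg_cong[where f="\<lambda>h. dsubst h B"],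
        auto split: nat.split simp: dlift_def dren_dren comp_def)
qed auto

lemma dsubst_dsubst: "dsubst t (dsubst s X) = dsubst (dsubst t \<circ> s) X"
proof (induct X arbitrary: s t)
  case (DPi A B)
  then show ?case
    by simp (rule arg_cong[where f="\<lambda>h. dsubst h B"],
        auto split: nat.split simp: dlift_def dren_dsubst dsubst_dren comp_def)
qed auto

lemma dsubst_cong: "(\<And>i. i \<in> dfv X \<Longrightarrow> s i = s' i) \<Longrightarrow> dsubst s X = dsubst s' X"
proof (induct X arbitrary: s s')
  case (DPi A B)
  have "dsubst s A = dsubst s' A"
    by (rule DPi.hyps(1)) (use DPi.prems in auto)
  moreover have "dsubst (dexts s) B = dsubst (dexts s') B"
  proof (rule DPi.hyps(2))
    fix i assume "i \<in> dfv B"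
    then show "dexts s i = dexts s' i" using DPi.prems by (cases i) auto
  qed
  ultimately show ?case by simp
next
  case (DApp M N)
  then show ?case by (metis UnCI dfv.simps(4) dsubst.simps(4))
next
  case (DLab l Ns)
  have "dsubst s N = dsubst s' N" if "N \<in> set Ns" for N
    by (rule DLab.hyps[OF that]) (use DLab.prems that in auto)
  then show ?case by simp
qed simp_all

lemma dsubst_DVar [simp]: "dsubst DVar X = X"
proof (induct X)
  case (DPi A B)
  have "dexts DVar = DVar" by (auto simp: dlift_def split: nat.split)
  then show ?case using DPi by simp
qed (auto simp: map_idI)

lemma dlift_DVar [simp]: "dlift (DVar i) = DVar (Suc i)"
  by (simp add: dlift_def)

lemma dlift_as_dsubst: "dlift X = dsubst (\<lambda>i. DVar (Suc i)) X"
  using dsubst_dren[of DVar Suc X] by (simp add: dlift_def comp_def)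

lemma dsubst_dlift: "dsubst s (dlift X) = dsubst (\<lambda>j. s (Suc j)) X"
  by (simp add: dlift_def dsubst_dren comp_def)

lemma dlift_dsubst: "dlift (dsubst s X) = dsubst (dlift \<circ> s) X"
  by (simp add: dlift_def dren_dsubst comp_def)

definition cexts :: "(nat \<Rightarrow> cterm) \<Rightarrow> nat \<Rightarrow> cterm" where
  "cexts \<sigma> i = (case i of 0 \<Rightarrow> CVar 0 | Suc j \<Rightarrow> clift 0 (\<sigma> j))"

primrec cpsubst :: "(nat \<Rightarrow> cterm) \<Rightarrow> cterm \<Rightarrow> cterm" where
  "cpsubst \<sigma> (CVar i) = \<sigma> i"
| "cpsubst \<sigma> (CU n) = CU n"
| "cpsubst \<sigma> (CPi A B) = CPi (cpsubst \<sigma> A) (cpsubst (cexts \<sigma>) B)"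
| "cpsubst \<sigma> (CApp M N) = CApp (cpsubst \<sigma> M) (cpsubst \<sigma> N)"
| "cpsubst \<sigma> (CLam t A M) = CLam t (cpsubst \<sigma> A) (cpsubst (cexts \<sigma>) M)"
| "cpsubst \<sigma> CTUnit = CTUnit"
| "cpsubst \<sigma> CUnitV = CUnitV"
| "cpsubst \<sigma> CTNat = CTNat"
| "cpsubst \<sigma> (CNatV n) = CNatV n"

lemma cexts_CVar [simp]: "cexts CVar = CVar"
  by (auto simp: cexts_def split: nat.split)

lemma cpsubst_CVar [simp]: "cpsubst CVar M = M"
  by (induct M) simp_all

lemma cexts_clift_ren:
  "cexts (\<lambda>i. CVar (if i < k then i else Suc i)) = (\<lambda>i. CVar (if i < Suc k then i else Suc i))"
  by (auto simp: cexts_def split: nat.split)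

lemma clift_as_cpsubst: "clift k M = cpsubst (\<lambda>i. CVar (if i < k then i else Suc i)) M"
  by (induct M arbitrary: k) (simp_all add: cexts_clift_ren)

lemma cexts_csubst:
  "cexts (\<lambda>i. if i < k then CVar i else if i = k then N else CVar (i - 1)) =
   (\<lambda>i. if i < Suc k then CVar i else if i = Suc k then clift 0 N else CVar (i - 1))"
  by (auto simp: cexts_def split: nat.split)

lemma csubst_as_cpsubst:
  "csubst M k N = cpsubst (\<lambda>i. if i < k then CVar i else if i = k then N else CVar (i - 1)) M"
  by (induct M arbitrary: k N) (simp_all add: cexts_csubst)

section \<open>Simulation of CC terms by DCC terms\<close>

definition label_inst :: "dterm list \<Rightarrow> (nat \<Rightarrow> dterm) \<Rightarrow> bool" where
  "label_inst Ns \<rho> \<longleftrightarrow> \<rho> 0 = DVar 0 \<and>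
     (\<forall>i. 0 < i \<and> i \<le> length Ns \<longrightarrow> \<rho> i = dlift (Ns ! (length Ns - i)))"

text \<open>\<open>label_inst Ns \<rho>\<close> constrains \<open>\<rho>\<close> only on the parameters and the bound variable of
  the label body; quantifying over all such \<open>\<rho>\<close> in \<open>sim_lam\<close> leaves room to send the
  remaining indices out of the way in the substitution lemma.\<close>
inductive sim :: "lctx \<Rightarrow> cterm \<Rightarrow> dterm \<Rightarrow> bool" for \<Delta> where
  sim_var: "sim \<Delta> (CVar i) (DVar i)"
| sim_u: "sim \<Delta> (CU i) (DU i)"
| sim_tunit: "sim \<Delta> CTUnit DTUnit"
| sim_unitv: "sim \<Delta> CUnitV DUnitV"
| sim_tnat: "sim \<Delta> CTNat DTNat"
| sim_natv: "sim \<Delta> (CNatV n) (DNatV n)"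
| sim_pi: "sim \<Delta> A At \<Longrightarrow> sim \<Delta> B Bt \<Longrightarrow> sim \<Delta> (CPi A B) (DPi At Bt)"
| sim_app: "sim \<Delta> M Mt \<Longrightarrow> sim \<Delta> N Nt \<Longrightarrow> sim \<Delta> (CApp M N) (DApp Mt Nt)"
| sim_lam: "(l, As, A', L, B') \<in> set \<Delta> \<Longrightarrow> length Ns = length As \<Longrightarrow>
    (\<And>\<rho>. label_inst Ns \<rho> \<Longrightarrow> sim \<Delta> N (dsubst \<rho> L)) \<Longrightarrow>
    sim \<Delta> (CLam t A N) (DLab l Ns)"

inductive_cases sim_CAppE: "sim \<Delta> (CApp M N) X"
inductive_cases sim_CLamE: "sim \<Delta> (CLam t A N) X"
inductive_cases sim_CUnitVE: "sim \<Delta> CUnitV X"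
inductive_cases sim_CNatVE: "sim \<Delta> (CNatV n) X"

lemma sim_mono: "sim \<Delta> M X \<Longrightarrow> set \<Delta> \<subseteq> set \<Delta>' \<Longrightarrow> sim \<Delta>' M X"
proof (induct rule: sim.induct)
  case (sim_lam l As A' L B' Ns N t A)
  then show ?case by (blast intro: sim.sim_lam)
qed (auto intro: sim.intros)

lemma sim_value: "value_of v A \<Longrightarrow> sim \<Delta> v X \<Longrightarrow> X = base_tr v"
  by (erule value_of.cases) (auto elim: sim_CUnitVE sim_CNatVE)

text \<open>Indices beyond the parameters are sent above \<open>m\<close>, where a later substitution can
  map them anywhere without disturbing the indices up to \<open>m\<close> (\<open>dsubst_label_subst\<close>).\<close>
definition label_subst :: "dterm list \<Rightarrow> nat \<Rightarrow> nat \<Rightarrow> dterm" where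
  "label_subst Ns m i =
     (if i = 0 then DVar 0 else if i \<le> length Ns then dlift (Ns ! (length Ns - i)) else DVar (m + i))"

lemma label_inst_label_subst: "label_inst Ns (label_subst Ns m)"
  by (simp add: label_inst_def label_subst_def)

lemma dsubst_label_subst:
  assumes bound: "\<forall>N\<in>set Ns. \<forall>j\<in>dfv N. Suc j \<le> m"
    and at_0: "\<theta> 0 = \<mu> 0"
    and at_params: "\<And>i. 0 < i \<Longrightarrow> i \<le> length Ns \<Longrightarrow>
      \<theta> i = dsubst (\<lambda>j. \<mu> (Suc j)) (Ns ! (length Ns - i))"
  shows "dsubst (\<lambda>j. if m < j then \<theta> (j - m) else \<mu> j) \<circ> label_subst Ns m = \<theta>"
proof
  fix i
  let ?\<tau> = "\<lambda>j. if m < j then \<theta> (j - m) else \<mu> j"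
  consider "i = 0" | "0 < i" "i \<le> length Ns" | "length Ns < i" by linarith
  then show "(dsubst ?\<tau> \<circ> label_subst Ns m) i = \<theta> i"
  proof cases
    case 2
    define Y where "Y = Ns ! (length Ns - i)"
    have "Y \<in> set Ns" using 2 by (simp add: Y_def)
    then have "\<forall>j\<in>dfv Y. Suc j \<le> m" using bound by blast
    then have "dsubst (\<lambda>j. ?\<tau> (Suc j)) Y = dsubst (\<lambda>j. \<mu> (Suc j)) Y"
      by (intro dsubst_cong) auto
    then show ?thesis
      using 2 at_params by (simp add: label_subst_def dsubst_dlift flip: Y_def)
  qed (simp_all add: label_subst_def at_0)
qed

lemma bound_cfv_dfv:
  obtains m :: nat where "\<forall>j\<in>cfv N. j \<le> m" and "\<forall>X\<in>set Ns. \<forall>j\<in>dfv X. Suc j \<le> m"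
proof -
  have "finite (cfv N \<union> (\<Union>X\<in>set Ns. Suc ` dfv X))"
    using finite_cfv finite_dfv by auto
  then obtain m where "\<forall>j\<in>cfv N \<union> (\<Union>X\<in>set Ns. Suc ` dfv X). j \<le> m"
    using finite_nat_set_iff_bounded_le by blast
  then show thesis using that by blast
qed

lemma rel_cexts_dexts:
  assumes "R (CVar 0) (DVar 0)" and "\<And>a b. R a b \<Longrightarrow> R (clift 0 a) (dlift b)"
    and "\<And>j. i = Suc j \<Longrightarrow> R (\<sigma> j) (\<tau> j)"
  shows "R (cexts \<sigma> i) (dexts \<tau> i)"
  using assms by (cases i) (auto simp: cexts_def)

text \<open>Stated for an arbitrary relation \<open>R\<close> between substituted terms so that one induction
  gives both renaming (\<open>R\<close> relating equal variables), which yields \<open>sim_lift\<close>, and then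
  substitution of related terms.\<close>
lemma sim_cpsubst_rel:
  assumes R_sim: "\<And>a b. R a b \<Longrightarrow> sim \<Delta> a b"
    and R_lift: "\<And>a b. R a b \<Longrightarrow> R (clift 0 a) (dlift b)"
    and R_0: "R (CVar 0) (DVar 0)"
  shows "sim \<Delta> M X \<Longrightarrow> (\<And>i. i \<in> cfv M \<Longrightarrow> R (\<sigma> i) (\<tau> i)) \<Longrightarrow>
    sim \<Delta> (cpsubst \<sigma> M) (dsubst \<tau> X)"
proof (induct arbitrary: \<sigma> \<tau> rule: sim.induct)
  case (sim_pi A At B Bt)
  have "R (cexts \<sigma> i) (dexts \<tau> i)" if "i \<in> cfv B" for i
    using that sim_pi.prems by (intro rel_cexts_dexts[OF R_0 R_lift]) auto
  then show ?case using sim_pi by (auto intro!: sim.sim_pi)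
next
  case (sim_lam l As A' L B' Ns N t A)
  show ?case unfolding cpsubst.simps dsubst.simps
  proof (rule sim.sim_lam)
    fix \<rho> assume inst: "label_inst (map (dsubst \<tau>) Ns) \<rho>"
    obtain m where bound_N: "\<forall>j\<in>cfv N. j \<le> m" and bound_Ns: "\<forall>X\<in>set Ns. \<forall>j\<in>dfv X. Suc j \<le> m"
      using bound_cfv_dfv by blast
    define \<tau>' where "\<tau>' = (\<lambda>j. if m < j then \<rho> (j - m) else dexts \<tau> j)"
    have "R (cexts \<sigma> i) (\<tau>' i)" if "i \<in> cfv N" for i
      using that sim_lam.prems bound_N
      by (auto simp: \<tau>'_def intro!: rel_cexts_dexts[OF R_0 R_lift])
    then have "sim \<Delta> (cpsubst (cexts \<sigma>) N) (dsubst \<tau>' (dsubst (label_subst Ns m) L))"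
      by (rule sim_lam.hyps(4)[OF label_inst_label_subst])
    moreover have "dsubst \<tau>' \<circ> label_subst Ns m = \<rho>"
      unfolding \<tau>'_def using bound_Ns inst
      by (intro dsubst_label_subst) (auto simp: label_inst_def dlift_dsubst comp_def)
    ultimately show "sim \<Delta> (cpsubst (cexts \<sigma>) N) (dsubst \<rho> L)"
      by (simp add: dsubst_dsubst)
  qed (use sim_lam in auto)
qed (auto intro: sim.intros R_sim)

lemma sim_lift:
  assumes "sim \<Delta> M X"
  shows "sim \<Delta> (clift 0 M) (dlift X)"
proof -
  have "sim \<Delta> (cpsubst (\<lambda>i. CVar (Suc i)) M) (dsubst (\<lambda>i. DVar (Suc i)) X)"
    by (rule sim_cpsubst_rel[where R = "\<lambda>a b. \<exists>i. a = CVar i \<and> b = DVar i", OF _ _ _ assms])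
      (auto intro: sim_var)
  then show ?thesis by (simp add: clift_as_cpsubst[of 0] dlift_as_dsubst)
qed

lemma sim_cpsubst:
  "sim \<Delta> M X \<Longrightarrow> (\<And>i. i \<in> cfv M \<Longrightarrow> sim \<Delta> (\<sigma> i) (\<tau> i)) \<Longrightarrow>
   sim \<Delta> (cpsubst \<sigma> M) (dsubst \<tau> X)"
  using sim_cpsubst_rel[of "sim \<Delta>"] sim_lift sim_var by blast

lemma sim_beta_step:
  assumes "sim \<Delta> (CApp (CLam t A N) P) X"
  shows "\<exists>X'. dstep \<Delta> X X' \<and> sim \<Delta> (csubst N 0 P) X'"
proof -
  obtain Ns Pt l As A' L B' where X: "X = DApp (DLab l Ns) Pt" and sim_P: "sim \<Delta> P Pt"
    and entry: "(l, As, A', L, B') \<in> set \<Delta>" and len: "length Ns = length As"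
    and body: "\<And>\<rho>. label_inst Ns \<rho> \<Longrightarrow> sim \<Delta> N (dsubst \<rho> L)"
    using assms by (auto elim!: sim_CAppE sim_CLamE)
  obtain m where bound_N: "\<forall>j\<in>cfv N. j \<le> m" and bound_Ns: "\<forall>X\<in>set Ns. \<forall>j\<in>dfv X. Suc j \<le> m"
    using bound_cfv_dfv by blast
  define \<mu> where "\<mu> = (\<lambda>j. case j of 0 \<Rightarrow> Pt | Suc k \<Rightarrow> DVar k)"
  define \<tau> where "\<tau> = (\<lambda>j. if m < j then lsub Ns Pt (j - m) else \<mu> j)"
  have "sim \<Delta> (cpsubst (\<lambda>i. if i = 0 then P else CVar (i - 1)) N) (dsubst \<tau> (dsubst (label_subst Ns m) L))"
  proof (rule sim_cpsubst[OF body[OF label_inst_label_subst]])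
    fix i assume "i \<in> cfv N"
    then have "i \<le> m" using bound_N by blast
    then show "sim \<Delta> (if i = 0 then P else CVar (i - 1)) (\<tau> i)"
      using sim_P by (auto simp: \<tau>_def \<mu>_def intro: sim_var split: nat.split)
  qed
  moreover have "dsubst \<tau> \<circ> label_subst Ns m = lsub Ns Pt"
    unfolding \<tau>_def using bound_Ns by (intro dsubst_label_subst) (simp_all add: \<mu>_def lsub_def)
  ultimately have "sim \<Delta> (csubst N 0 P) (dsubst (lsub Ns Pt) L)"
    by (simp add: csubst_as_cpsubst dsubst_dsubst)
  moreover have "dstep \<Delta> X (dsubst (lsub Ns Pt) L)"
    unfolding X using entry len by (rule dstep.lab)
  ultimately show ?thesis by blast
qed

lemma dsteps_AppL: "dsteps \<Delta> M M' \<Longrightarrow> dsteps \<Delta> (DApp M N) (DApp M' N)"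
  unfolding dsteps_def
  by (induct rule: rtranclp_induct) (auto intro: rtranclp.rtrancl_into_rtrancl dstep.AppL)

lemma sim_whr: "whr M M' \<Longrightarrow> sim \<Delta> M X \<Longrightarrow> \<exists>X'. dsteps \<Delta> X X' \<and> sim \<Delta> M' X'"
proof (induct arbitrary: X rule: whr.induct)
  case (whr_beta t A N P)
  then show ?case using sim_beta_step unfolding dsteps_def by blast
next
  case (whr_app M M' P)
  then obtain Mt Pt where X: "X = DApp Mt Pt" and "sim \<Delta> M Mt" "sim \<Delta> P Pt"
    by (auto elim: sim_CAppE)
  then obtain Mt' where "dsteps \<Delta> Mt Mt'" "sim \<Delta> M' Mt'" using whr_app.hyps(2) by blast
  then show ?case using X \<open>sim \<Delta> P Pt\<close> by (auto intro: dsteps_AppL sim_app)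
qed

lemma sim_whrs: "whr\<^sup>*\<^sup>* M M' \<Longrightarrow> sim \<Delta> M X \<Longrightarrow> \<exists>X'. dsteps \<Delta> X X' \<and> sim \<Delta> M' X'"
proof (induct arbitrary: X rule: converse_rtranclp_induct)
  case base
  then show ?case unfolding dsteps_def by blast
next
  case (step M M'')
  then obtain X'' where "dsteps \<Delta> X X''" "sim \<Delta> M'' X''" using sim_whr by blast
  then show ?case using step.hyps(3) unfolding dsteps_def by (meson rtranclp_trans)
qed

lemma set_lunion [simp]: "set (lunion xs ys) = set xs \<union> set ys"
  unfolding lunion_def by auto

lemma set_fvl: "set xs \<subseteq> set (fvl n \<Gamma> xs)"
  by (cases n) auto

lemma cfv_subset_FV: "cfv M \<subseteq> set (FV \<Gamma> M A)"
  using set_fvl finite_cfv unfolding FV_def ctxord_def by fastforce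

lemma pos_less_length: "j \<in> set xs \<Longrightarrow> pos xs j < length xs"
  by (induct xs) auto

lemma nth_pos: "j \<in> set xs \<Longrightarrow> xs ! pos xs j = j"
  by (induct xs) auto

lemma label_inst_upren_telren:
  assumes inst: "label_inst (map DVar xs) \<rho>" and i: "\<And>j. i = Suc j \<Longrightarrow> j \<in> set xs"
  shows "\<rho> (upren (telren xs (length xs)) i) = DVar i"
proof (cases i)
  case (Suc j)
  define p where "p = pos xs j"
  have "j \<in> set xs" using i Suc by blast
  then have "p < length xs" and "xs ! p = j"
    unfolding p_def by (simp_all add: pos_less_length nth_pos)
  moreover have "upren (telren xs (length xs)) i = Suc (length xs - Suc p)"
    by (simp add: Suc upren_def telren_def p_def)
  ultimately show ?thesis using inst Suc by (simp add: label_inst_def)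
qed (use inst in \<open>simp add: upren_def label_inst_def\<close>)

lemma tr_imp_sim: "tr \<Gamma> M A Mt \<Delta> \<Longrightarrow> sim \<Delta> M Mt"
proof (induct rule: tr.induct)
  case (tr_lam A \<Gamma> M B Mt \<Delta>M i At \<Delta>A j Bt \<Delta>B xs t Ats)
  let ?entry = "(t, map (\<lambda>k. dren (telren xs k) (Ats ! k)) [0..<length xs],
    dren (telren xs (length xs)) At, dren (upren (telren xs (length xs))) Mt,
    dren (upren (telren xs (length xs))) Bt)"
  let ?\<Delta> = "lunion \<Delta>A \<Delta>M @ [?entry]"
  have sim_M: "sim ?\<Delta> M Mt" using tr_lam.hyps(2) by (rule sim_mono) auto
  have xs: "cfv (CLam t A M) \<subseteq> set xs" using tr_lam.hyps(7) cfv_subset_FV by blast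
  show ?case
  proof (rule sim_lam)
    show "?entry \<in> set ?\<Delta>" by simp
    fix \<rho> assume inst: "label_inst (map DVar xs) \<rho>"
    have "sim ?\<Delta> (cpsubst CVar M) (dsubst (\<rho> \<circ> upren (telren xs (length xs))) Mt)"
    proof (rule sim_cpsubst[OF sim_M])
      fix i assume "i \<in> cfv M"
      then have "\<rho> (upren (telren xs (length xs)) i) = DVar i"
        using xs by (intro label_inst_upren_telren[OF inst]) auto
      then show "sim ?\<Delta> (CVar i) ((\<rho> \<circ> upren (telren xs (length xs))) i)"
        by (simp add: sim_var)
    qed
    then show "sim ?\<Delta> M (dsubst \<rho> (dren (upren (telren xs (length xs))) Mt))"
      by (simp add: dsubst_dren)
  qed simp_all
next
  case tr_pi
  then show ?case by (auto intro!: sim_pi elim: sim_mono)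
next
  case tr_app
  then show ?case by (auto intro!: sim_app elim: sim_mono)
qed (auto intro: sim.intros elim: sim_mono)

lemma deq_refl: "deq \<Delta> X X"
  by (rule deq.common[where N = X]) (simp_all add: dsteps_def)

theorem corollary3p15:
  assumes "ground_type A"
    and "value_of v A"
    and "cc_ty [] M A"
    and "distinct (ctags M)"
    and "tr [] M A Mt \<Delta>M"
    and "cred M v"
  shows "\<exists>v'. dsteps (lunion [] \<Delta>M) Mt v' \<and> deq (lunion [] \<Delta>M) v' (base_tr v)"
proof -
  have "whr\<^sup>*\<^sup>* M v" using assms(6,2) by (rule cred_value_imp_whrs)
  moreover have "sim \<Delta>M M Mt" using assms(5) by (rule tr_imp_sim)
  ultimately obtain v' where "dsteps \<Delta>M Mt v'" and "sim \<Delta>M v v'" using sim_whrs by blast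
  moreover have "v' = base_tr v" using assms(2) \<open>sim \<Delta>M v v'\<close> by (rule sim_value)
  moreover have "lunion [] \<Delta>M = \<Delta>M" by (simp add: lunion_def)
  ultimately show ?thesis using deq_refl by metis
qed

end
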